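(* Let $n\geq 1$. The map $\rho_i\mapsto x^iy^{-i}$ ($1\leq i\leq n$) extends to a group isomorphism from the group with generators $\rho_1,\dots,\rho_n$ and relations $\rho_1\rho_n\rho_i=\rho_{i+1}\rho_n$ ($1\leq i\leq n-1$) onto the group $G(n,n+1)=\langle x,y\mid x^n=y^{n+1}\rangle$.
   Context: $G(n,n+1)$ is the $(n,n+1)$-torus knot group, given by the displayed presentation. *)

theory Defs
  imports "HOL-Algebra.Group"
begin

text \<open>Group presentations. A word over an alphabet of generators is a list of
letters (a, b); b = False means the generator a, b = True means its inverse.\<close>

type_synonym 'a word = "('a \<times> bool) list"

definition inv_word :: "'a word \<Rightarrow> 'a word" where
  "inv_word w = rev (map (\<lambda>(a, b). (a, \<not> b)) w)"

inductive pres_eq :: "'a word set \<Rightarrow> 'a word \<Rightarrow> 'a word \<Rightarrow> bool" for R where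
  refl: "pres_eq R w w"
| sym: "pres_eq R u v \<Longrightarrow> pres_eq R v u"
| trans: "pres_eq R u v \<Longrightarrow> pres_eq R v w \<Longrightarrow> pres_eq R u w"
| cancel: "pres_eq R (u @ [(a, b), (a, \<not> b)] @ v) (u @ v)"
| rel: "r \<in> R \<Longrightarrow> pres_eq R (u @ r @ v) (u @ v)"

definition pres_class :: "'a word set \<Rightarrow> 'a word \<Rightarrow> 'a word set" where
  "pres_class R w = {v. pres_eq R w v}"

definition presented_group :: "'a set \<Rightarrow> 'a word set \<Rightarrow> 'a word set monoid" where
  "presented_group S R =
     \<lparr> carrier = {pres_class R w | w. set w \<subseteq> S \<times> UNIV},
       mult = (\<lambda>A B. \<Union>a\<in>A. \<Union>b\<in>B. pres_class R (a @ b)),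
       one = pres_class R [] \<rparr>"

definition rho_rels :: "nat \<Rightarrow> nat word set" where
  "rho_rels n = {[(1, False), (n, False), (i, False)] @ inv_word [(Suc i, False), (n, False)]
                 | i. 1 \<le> i \<and> i \<le> n - 1}"

definition rho_group :: "nat \<Rightarrow> nat word set monoid" where
  "rho_group n = presented_group {1..n} (rho_rels n)"

datatype gxy = X | Y

definition torus_rels :: "nat \<Rightarrow> nat \<Rightarrow> gxy word set" where
  "torus_rels p q = {replicate p (X, False) @ replicate q (Y, True)}"

definition torus_group :: "nat \<Rightarrow> nat \<Rightarrow> gxy word set monoid" where
  "torus_group p q = presented_group UNIV (torus_rels p q)"

end

theory Submission
  imports Defs
begin

text \<open>Substituting \<open>x\<^sup>i y\<^sup>-\<^sup>i\<close> for \<open>\<rho>\<^sub>i\<close>, and \<open>\<rho>\<^sub>1 \<rho>\<^sub>n\<close>, \<open>\<rho>\<^sub>n\<close> for \<open>x\<close>, \<open>y\<close>,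
  gives maps between the two presentations that kill the relators and are inverse to each other
  on the generators, hence induce inverse isomorphisms (Tietze). In \<open>G(n, n+1)\<close> we have
  \<open>\<rho>\<^sub>n = x\<^sup>n y\<^sup>-\<^sup>n = y\<close>, so \<open>\<rho>\<^sub>1 \<rho>\<^sub>n \<rho>\<^sub>i = x \<rho>\<^sub>i = \<rho>\<^sub>i\<^sub>+\<^sub>1 \<rho>\<^sub>n\<close>.
  Conversely the relations say \<open>\<rho>\<^sub>i\<^sub>+\<^sub>1 = (\<rho>\<^sub>1 \<rho>\<^sub>n) \<rho>\<^sub>i \<rho>\<^sub>n\<^sup>-\<^sup>1\<close>, so by induction
  \<open>\<rho>\<^sub>i = (\<rho>\<^sub>1 \<rho>\<^sub>n)\<^sup>i \<rho>\<^sub>n\<^sup>-\<^sup>i\<close>; at \<open>i = n\<close> this is \<open>(\<rho>\<^sub>1 \<rho>\<^sub>n)\<^sup>n = \<rho>\<^sub>n\<^sup>n\<^sup>+\<^sup>1\<close>.\<close>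

lemma inv_word_Nil [simp]: "inv_word [] = []"
  by (simp add: inv_word_def)

lemma inv_word_Cons [simp]: "inv_word ((a, b) # w) = inv_word w @ [(a, \<not> b)]"
  by (simp add: inv_word_def)

lemma inv_word_append [simp]: "inv_word (u @ v) = inv_word v @ inv_word u"
  by (simp add: inv_word_def)

lemma inv_word_inv_word [simp]: "inv_word (inv_word w) = w"
  by (induction w) (auto simp: inv_word_def)

lemma inv_word_replicate [simp]: "inv_word (replicate k (a, False)) = replicate k (a, True)"
  by (induction k) (simp_all add: replicate_append_same)

lemma set_inv_word_subset: "set w \<subseteq> S \<times> UNIV \<Longrightarrow> set (inv_word w) \<subseteq> S \<times> UNIV"
  by (auto simp: inv_word_def)

lemma pres_eq_append_both: "pres_eq R u v \<Longrightarrow> pres_eq R (x @ u @ y) (x @ v @ y)"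
proof (induction rule: pres_eq.induct)
  case (refl w)
  show ?case by (rule pres_eq.refl)
next
  case (sym u v)
  show ?case using sym.IH by (rule pres_eq.sym)
next
  case (trans u v w)
  show ?case using trans.IH by (rule pres_eq.trans)
next
  case (cancel u a b v)
  show ?case using pres_eq.cancel[of R "x @ u" a b "v @ y"] by simp
next
  case (rel r u v)
  show ?case using pres_eq.rel[OF rel, of "x @ u" "v @ y"] by simp
qed

lemma pres_eq_append_cong:
  assumes "pres_eq R u u'" and "pres_eq R v v'"
  shows "pres_eq R (u @ v) (u' @ v')"
  using pres_eq_append_both[OF assms(1), of "[]" v] pres_eq_append_both[OF assms(2), of u' "[]"]
  by (auto intro: pres_eq.trans)

lemma pres_eq_relator: "r \<in> R \<Longrightarrow> pres_eq R r []"
  using pres_eq.rel[of r R "[]" "[]"] by simp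

lemma pres_eq_append_inv_word: "pres_eq R (w @ inv_word w) []"
proof (induction w)
  case Nil
  show ?case by (simp add: pres_eq.refl)
next
  case (Cons l w)
  obtain a b where l: "l = (a, b)" by fastforce
  have "pres_eq R ([(a, b)] @ (w @ inv_word w) @ [(a, \<not> b)]) ([(a, b)] @ [] @ [(a, \<not> b)])"
    using Cons.IH by (rule pres_eq_append_both)
  moreover have "pres_eq R ([] @ [(a, b), (a, \<not> b)] @ []) ([] @ [])"
    by (rule pres_eq.cancel)
  ultimately show ?case using l by (auto intro: pres_eq.trans)
qed

lemma pres_eq_inv_word_append: "pres_eq R (inv_word w @ w) []"
  using pres_eq_append_inv_word[of R "inv_word w"] by simp

lemma pres_class_eq_iff: "pres_class R u = pres_class R v \<longleftrightarrow> pres_eq R u v"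
  unfolding pres_class_def
  by (blast intro: pres_eq.refl pres_eq.sym pres_eq.trans)

lemma presented_group_mult:
  "pres_class R u \<otimes>\<^bsub>presented_group S R\<^esub> pres_class R v = pres_class R (u @ v)"
proof -
  have class_append: "pres_class R (u' @ v') = pres_class R (u @ v)"
    if "u' \<in> pres_class R u" "v' \<in> pres_class R v" for u' v'
  proof -
    have "pres_eq R u u'" "pres_eq R v v'"
      using that by (simp_all add: pres_class_def)
    then have "pres_eq R (u @ v) (u' @ v')"
      by (rule pres_eq_append_cong)
    then show ?thesis
      unfolding pres_class_eq_iff by (rule pres_eq.sym)
  qed
  have "(\<Union>u'\<in>pres_class R u. \<Union>v'\<in>pres_class R v. pres_class R (u' @ v')) =
      (\<Union>u'\<in>pres_class R u. \<Union>v'\<in>pres_class R v. pres_class R (u @ v))"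
    by (rule SUP_cong[OF HOL.refl], rule SUP_cong[OF HOL.refl]) (rule class_append)
  also have "\<dots> = pres_class R (u @ v)"
    using pres_eq.refl[of R u] pres_eq.refl[of R v] by (auto simp: pres_class_def)
  finally show ?thesis
    by (simp add: presented_group_def)
qed

lemma presented_group_one: "\<one>\<^bsub>presented_group S R\<^esub> = pres_class R []"
  by (simp add: presented_group_def)

lemma pres_class_in_carrier: "set w \<subseteq> S \<times> UNIV \<Longrightarrow> pres_class R w \<in> carrier (presented_group S R)"
  by (auto simp: presented_group_def)

lemma pres_class_in_carrier_UNIV [simp]: "pres_class R w \<in> carrier (presented_group UNIV R)"
  by (simp add: pres_class_in_carrier)

lemma carrier_presented_group:
  "carrier (presented_group S R) = {pres_class R w | w. set w \<subseteq> S \<times> UNIV}"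
  by (simp add: presented_group_def)

lemma group_presented_group: "group (presented_group S R)"
proof (rule groupI)
  fix x y assume "x \<in> carrier (presented_group S R)" "y \<in> carrier (presented_group S R)"
  then show "x \<otimes>\<^bsub>presented_group S R\<^esub> y \<in> carrier (presented_group S R)"
  proof (clarsimp simp: carrier_presented_group)
    fix u v :: "'a word" assume "set u \<subseteq> S \<times> UNIV" "set v \<subseteq> S \<times> UNIV"
    then show "\<exists>w. pres_class R u \<otimes>\<^bsub>presented_group S R\<^esub> pres_class R v = pres_class R w \<and>
        set w \<subseteq> S \<times> UNIV"
      by (intro exI[of _ "u @ v"]) (simp add: presented_group_mult)
  qed
next
  show "\<one>\<^bsub>presented_group S R\<^esub> \<in> carrier (presented_group S R)"
    by (auto simp: carrier_presented_group presented_group_one)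
next
  fix x y z
  assume "x \<in> carrier (presented_group S R)" "y \<in> carrier (presented_group S R)"
    "z \<in> carrier (presented_group S R)"
  then show "x \<otimes>\<^bsub>presented_group S R\<^esub> y \<otimes>\<^bsub>presented_group S R\<^esub> z =
      x \<otimes>\<^bsub>presented_group S R\<^esub> (y \<otimes>\<^bsub>presented_group S R\<^esub> z)"
    by (auto simp: carrier_presented_group presented_group_mult)
next
  fix x assume "x \<in> carrier (presented_group S R)"
  then show "\<one>\<^bsub>presented_group S R\<^esub> \<otimes>\<^bsub>presented_group S R\<^esub> x = x"
    by (auto simp: carrier_presented_group presented_group_mult presented_group_one)
next
  fix x assume "x \<in> carrier (presented_group S R)"
  then obtain w where x: "x = pres_class R w" and w: "set w \<subseteq> S \<times> UNIV"
    by (auto simp: carrier_presented_group)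
  have "pres_class R (inv_word w) \<in> carrier (presented_group S R)"
    using w by (simp add: pres_class_in_carrier set_inv_word_subset)
  moreover have "pres_class R (inv_word w) \<otimes>\<^bsub>presented_group S R\<^esub> x = \<one>\<^bsub>presented_group S R\<^esub>"
    by (simp add: x presented_group_mult presented_group_one pres_class_eq_iff pres_eq_inv_word_append)
  ultimately show "\<exists>y\<in>carrier (presented_group S R). y \<otimes>\<^bsub>presented_group S R\<^esub> x = \<one>\<^bsub>presented_group S R\<^esub>"
    by blast
qed

lemma presented_group_inv:
  assumes "set w \<subseteq> S \<times> UNIV"
  shows "inv\<^bsub>presented_group S R\<^esub> pres_class R w = pres_class R (inv_word w)"
proof (rule group.inv_equality[OF group_presented_group])
  show "pres_class R (inv_word w) \<otimes>\<^bsub>presented_group S R\<^esub> pres_class R w = \<one>\<^bsub>presented_group S R\<^esub>"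
    by (simp add: presented_group_mult presented_group_one pres_class_eq_iff pres_eq_inv_word_append)
qed (simp_all add: assms pres_class_in_carrier set_inv_word_subset)

subsection \<open>Substitution of words for generators\<close>

definition subst_word :: "('a \<Rightarrow> 'b word) \<Rightarrow> 'a word \<Rightarrow> 'b word" where
  "subst_word \<theta> w = concat (map (\<lambda>(a, b). if b then inv_word (\<theta> a) else \<theta> a) w)"

lemma subst_word_Nil [simp]: "subst_word \<theta> [] = []"
  by (simp add: subst_word_def)

lemma subst_word_Cons [simp]:
  "subst_word \<theta> ((a, b) # w) = (if b then inv_word (\<theta> a) else \<theta> a) @ subst_word \<theta> w"
  by (simp add: subst_word_def)

lemma subst_word_append [simp]: "subst_word \<theta> (u @ v) = subst_word \<theta> u @ subst_word \<theta> v"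
  by (simp add: subst_word_def)

lemma subst_word_replicate: "subst_word \<theta> (replicate k (a, False)) = concat (replicate k (\<theta> a))"
  by (induction k) auto

lemma subst_word_singleton [simp]: "subst_word (\<lambda>a. [(a, False)]) w = w"
  by (induction w) (auto simp: inv_word_def)

lemma subst_word_inv_word: "subst_word \<theta> (inv_word w) = inv_word (subst_word \<theta> w)"
  by (induction w) auto

lemma subst_word_subst_word:
  "subst_word \<eta> (subst_word \<theta> w) = subst_word (\<lambda>a. subst_word \<eta> (\<theta> a)) w"
  by (induction w) (auto simp: subst_word_inv_word)

lemma set_subst_word_subset:
  assumes "set w \<subseteq> S \<times> UNIV" and "\<And>a. a \<in> S \<Longrightarrow> set (\<theta> a) \<subseteq> S' \<times> UNIV"
  shows "set (subst_word \<theta> w) \<subseteq> S' \<times> UNIV"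
  using assms(1)
proof (induction w)
  case Nil
  show ?case by simp
next
  case (Cons l w)
  obtain a b where l: "l = (a, b)" by fastforce
  with Cons.prems have "set (\<theta> a) \<subseteq> S' \<times> UNIV"
    by (intro assms(2)) auto
  with Cons show ?case
    by (simp add: l set_inv_word_subset)
qed

lemma pres_eq_subst_word:
  assumes "\<And>r. r \<in> R \<Longrightarrow> pres_eq R' (subst_word \<theta> r) []"
  shows "pres_eq R u v \<Longrightarrow> pres_eq R' (subst_word \<theta> u) (subst_word \<theta> v)"
proof (induction rule: pres_eq.induct)
  case (refl w)
  show ?case by (rule pres_eq.refl)
next
  case (sym u v)
  show ?case using sym.IH by (rule pres_eq.sym)
next
  case (trans u v w)
  show ?case using trans.IH by (rule pres_eq.trans)
next
  case (cancel u a b v)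
  have "pres_eq R' (subst_word \<theta> [(a, b), (a, \<not> b)]) []"
    by (cases b) (simp_all add: pres_eq_append_inv_word pres_eq_inv_word_append)
  from pres_eq_append_both[OF this, of "subst_word \<theta> u" "subst_word \<theta> v"] show ?case
    by simp
next
  case (rel r u v)
  show ?case
    using pres_eq_append_both[OF assms[OF rel], of "subst_word \<theta> u" "subst_word \<theta> v"] by simp
qed

lemma pres_class_concat_replicate:
  "pres_class R (concat (replicate k w)) = pres_class R w [^]\<^bsub>presented_group S R\<^esub> k"
proof (induction k)
  case 0
  show ?case by (simp add: presented_group_one)
next
  case (Suc k)
  have "pres_class R (concat (replicate (Suc k) w)) =
      pres_class R (concat (replicate k w)) \<otimes>\<^bsub>presented_group S R\<^esub> pres_class R w"
    by (simp add: presented_group_mult flip: replicate_append_same)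
  with Suc.IH show ?case
    by simp
qed

lemma pres_class_replicate:
  "pres_class R (replicate k l) = pres_class R [l] [^]\<^bsub>presented_group S R\<^esub> k"
  using pres_class_concat_replicate[of R k "[l]" S] by simp

lemma pres_eq_inv_word_cong: "pres_eq R u v \<Longrightarrow> pres_eq R (inv_word u) (inv_word v)"
  using presented_group_inv[of u UNIV R] presented_group_inv[of v UNIV R]
  by (simp flip: pres_class_eq_iff)

lemma pres_eq_append_inv_word_Nil_iff:
  "pres_eq R (u @ inv_word v) [] \<longleftrightarrow> pres_class R u = pres_class R v"
proof -
  interpret group "presented_group UNIV R"
    by (rule group_presented_group)
  have "pres_eq R (u @ inv_word v) [] \<longleftrightarrow> pres_class R (u @ inv_word v) = \<one>\<^bsub>presented_group UNIV R\<^esub>"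
    by (simp add: presented_group_one pres_class_eq_iff)
  also have "pres_class R (u @ inv_word v) =
      pres_class R u \<otimes>\<^bsub>presented_group UNIV R\<^esub> inv\<^bsub>presented_group UNIV R\<^esub> pres_class R v"
    by (simp add: presented_group_inv presented_group_mult)
  finally show ?thesis
    by (simp add: inv_solve_right')
qed

lemma pres_eq_subst_word_append_inv_word:
  "pres_class R (subst_word \<theta> u) = pres_class R (subst_word \<theta> v) \<Longrightarrow>
    pres_eq R (subst_word \<theta> (u @ inv_word v)) []"
  by (simp only: subst_word_append subst_word_inv_word pres_eq_append_inv_word_Nil_iff)

lemma pres_eq_subst_word_self:
  assumes "\<And>a. a \<in> fst ` set w \<Longrightarrow> pres_eq R (\<theta> a) [(a, False)]"
  shows "pres_eq R (subst_word \<theta> w) w"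
  using assms
proof (induction w)
  case Nil
  show ?case by (simp add: pres_eq.refl)
next
  case (Cons l w)
  obtain a b where l: "l = (a, b)" by fastforce
  have \<theta>_a: "pres_eq R (\<theta> a) [(a, False)]"
    using Cons.prems by (simp add: l)
  have "pres_eq R (if b then inv_word (\<theta> a) else \<theta> a) [(a, b)]"
    using pres_eq_inv_word_cong[OF \<theta>_a] \<theta>_a by auto
  moreover have "pres_eq R (subst_word \<theta> w) w"
    using Cons by simp
  ultimately show ?case
    using pres_eq_append_cong by (fastforce simp: l)
qed

definition presentation_hom ::
    "'a word set \<Rightarrow> 'b word set \<Rightarrow> ('a \<Rightarrow> 'b word) \<Rightarrow> 'a word set \<Rightarrow> 'b word set" where
  "presentation_hom R R' \<theta> A = pres_class R' (subst_word \<theta> (SOME w. A = pres_class R w))"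

lemma presentation_hom_pres_class:
  assumes "\<And>r. r \<in> R \<Longrightarrow> pres_eq R' (subst_word \<theta> r) []"
  shows "presentation_hom R R' \<theta> (pres_class R w) = pres_class R' (subst_word \<theta> w)"
proof -
  define w' where "w' = (SOME w'. pres_class R w = pres_class R w')"
  have "pres_class R w = pres_class R w'"
    unfolding w'_def by (rule someI) (rule HOL.refl)
  then have "pres_eq R w' w"
    by (simp add: pres_class_eq_iff pres_eq.sym)
  then have "pres_eq R' (subst_word \<theta> w') (subst_word \<theta> w)"
    using pres_eq_subst_word[of R R' \<theta> w' w] assms by blast
  then show ?thesis
    by (simp add: presentation_hom_def w'_def pres_class_eq_iff)
qed

lemma presentation_hom_hom:
  assumes rels: "\<And>r. r \<in> R \<Longrightarrow> pres_eq R' (subst_word \<theta> r) []"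
    and gens: "\<And>a. a \<in> S \<Longrightarrow> set (\<theta> a) \<subseteq> S' \<times> UNIV"
  shows "presentation_hom R R' \<theta> \<in> hom (presented_group S R) (presented_group S' R')"
proof (rule homI)
  fix x assume "x \<in> carrier (presented_group S R)"
  then obtain w where "x = pres_class R w" "set w \<subseteq> S \<times> UNIV"
    by (auto simp: carrier_presented_group)
  then show "presentation_hom R R' \<theta> x \<in> carrier (presented_group S' R')"
    by (simp add: presentation_hom_pres_class[OF rels] pres_class_in_carrier
        set_subst_word_subset gens)
next
  fix x y
  assume "x \<in> carrier (presented_group S R)" "y \<in> carrier (presented_group S R)"
  then obtain u v where "x = pres_class R u" "y = pres_class R v"
    by (auto simp: carrier_presented_group)
  then show "presentation_hom R R' \<theta> (x \<otimes>\<^bsub>presented_group S R\<^esub> y) =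
      presentation_hom R R' \<theta> x \<otimes>\<^bsub>presented_group S' R'\<^esub> presentation_hom R R' \<theta> y"
    by (simp add: presentation_hom_pres_class[OF rels] presented_group_mult)
qed

lemma presentation_hom_inverse:
  assumes "\<And>r. r \<in> R \<Longrightarrow> pres_eq R' (subst_word \<theta> r) []"
    and "\<And>r. r \<in> R' \<Longrightarrow> pres_eq R (subst_word \<eta> r) []"
    and "\<And>a. a \<in> S \<Longrightarrow> pres_eq R (subst_word \<eta> (\<theta> a)) [(a, False)]"
    and "x \<in> carrier (presented_group S R)"
  shows "presentation_hom R' R \<eta> (presentation_hom R R' \<theta> x) = x"
proof -
  obtain w where x: "x = pres_class R w" and w: "set w \<subseteq> S \<times> UNIV"
    using assms(4) by (auto simp: carrier_presented_group)
  have "pres_eq R (subst_word (\<lambda>a. subst_word \<eta> (\<theta> a)) w) w"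
    using w assms(3) by (intro pres_eq_subst_word_self) auto
  then show ?thesis
    by (simp add: x presentation_hom_pres_class assms(1,2) subst_word_subst_word pres_class_eq_iff)
qed

lemma presentation_hom_iso:
  assumes rels: "\<And>r. r \<in> R \<Longrightarrow> pres_eq R' (subst_word \<theta> r) []"
    and rels': "\<And>r. r \<in> R' \<Longrightarrow> pres_eq R (subst_word \<eta> r) []"
    and gens: "\<And>a. a \<in> S \<Longrightarrow> set (\<theta> a) \<subseteq> S' \<times> UNIV"
    and gens': "\<And>b. b \<in> S' \<Longrightarrow> set (\<eta> b) \<subseteq> S \<times> UNIV"
    and inverse: "\<And>a. a \<in> S \<Longrightarrow> pres_eq R (subst_word \<eta> (\<theta> a)) [(a, False)]"
    and inverse': "\<And>b. b \<in> S' \<Longrightarrow> pres_eq R' (subst_word \<theta> (\<eta> b)) [(b, False)]"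
  shows "presentation_hom R R' \<theta> \<in> iso (presented_group S R) (presented_group S' R')"
proof -
  have hom: "presentation_hom R R' \<theta> \<in> hom (presented_group S R) (presented_group S' R')"
    using rels gens by (rule presentation_hom_hom)
  have hom': "presentation_hom R' R \<eta> \<in> hom (presented_group S' R') (presented_group S R)"
    using rels' gens' by (rule presentation_hom_hom)
  have "bij_betw (presentation_hom R R' \<theta>) (carrier (presented_group S R)) (carrier (presented_group S' R'))"
    by (rule bij_betw_byWitness[where f' = "presentation_hom R' R \<eta>"])
      (use presentation_hom_inverse[OF rels rels' inverse]
        presentation_hom_inverse[OF rels' rels inverse'] hom_carrier[OF hom] hom_carrier[OF hom']
       in auto)
  with hom show ?thesis
    by (simp add: iso_def)
qed

subsection \<open>The relations in an abstract group\<close>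

context group
begin

lemma pow_Suc_mult_inv_pow_Suc:
  assumes "x \<in> carrier G" and "y \<in> carrier G"
  shows "x [^] Suc i \<otimes> inv (y [^] Suc i) = x \<otimes> (x [^] i \<otimes> inv (y [^] i)) \<otimes> inv y"
  unfolding nat_pow_Suc2[OF assms(1)] nat_pow_Suc2[OF assms(2)]
  using assms by (simp add: m_assoc inv_mult_group del: nat_pow_Suc)

lemma torus_relation_imp_pow_mult_inv_pow:
  assumes "x \<in> carrier G" and "y \<in> carrier G" and "x [^] n = y [^] Suc n"
  shows "x [^] n \<otimes> inv (y [^] n) = y"
proof -
  have "x [^] n \<otimes> inv (y [^] n) = y \<otimes> y [^] n \<otimes> inv (y [^] n)"
    by (simp only: assms(3) nat_pow_Suc2[OF assms(2)])
  then show ?thesis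
    using assms(2) by (simp add: m_assoc)
qed

lemma torus_relation_imp_rho_relation:
  assumes x: "x \<in> carrier G" and y: "y \<in> carrier G" and xy: "x [^] n = y [^] Suc n"
  defines "\<rho> \<equiv> \<lambda>i. x [^] i \<otimes> inv (y [^] i)"
  shows "\<rho> 1 \<otimes> \<rho> n \<otimes> \<rho> i = \<rho> (Suc i) \<otimes> \<rho> n"
proof -
  have \<rho>_n: "\<rho> n = y"
    unfolding \<rho>_def using x y xy by (rule torus_relation_imp_pow_mult_inv_pow)
  have \<rho>_Suc: "\<rho> (Suc i) = x \<otimes> \<rho> i \<otimes> inv y"
    unfolding \<rho>_def by (rule pow_Suc_mult_inv_pow_Suc[OF x y])
  have \<rho>_closed: "\<rho> j \<in> carrier G" for j
    using x y by (simp add: \<rho>_def)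
  have "\<rho> 1 = x \<otimes> inv y"
    using x y by (simp add: \<rho>_def)
  then have "\<rho> 1 \<otimes> \<rho> n = x \<otimes> inv y \<otimes> y"
    by (simp only: \<rho>_n)
  then have "\<rho> 1 \<otimes> \<rho> n \<otimes> \<rho> i = x \<otimes> \<rho> i"
    using x y by (simp add: m_assoc)
  also have "\<dots> = \<rho> (Suc i) \<otimes> \<rho> n"
    using x y \<rho>_closed by (simp add: \<rho>_Suc \<rho>_n m_assoc)
  finally show ?thesis .
qed

lemma rho_relations_closed_form:
  assumes closed: "\<And>j. \<rho> j \<in> carrier G"
    and rels: "\<And>j. 1 \<le> j \<Longrightarrow> j < n \<Longrightarrow> \<rho> 1 \<otimes> \<rho> n \<otimes> \<rho> j = \<rho> (Suc j) \<otimes> \<rho> n"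
    and "1 \<le> i" and "i \<le> n"
  shows "\<rho> i = (\<rho> 1 \<otimes> \<rho> n) [^] i \<otimes> inv (\<rho> n [^] i)"
  using assms(3,4)
proof (induction i)
  case 0
  then show ?case by simp
next
  case (Suc i)
  show ?case
  proof (cases "i = 0")
    case True
    then show ?thesis
      using closed by (simp add: m_assoc)
  next
    case False
    then have "\<rho> (Suc i) = (\<rho> 1 \<otimes> \<rho> n) \<otimes> \<rho> i \<otimes> inv (\<rho> n)"
      using rels[of i] Suc.prems closed by (simp add: m_assoc)
    also have "\<dots> = (\<rho> 1 \<otimes> \<rho> n) \<otimes> ((\<rho> 1 \<otimes> \<rho> n) [^] i \<otimes> inv (\<rho> n [^] i)) \<otimes> inv (\<rho> n)"
      using Suc False by simp
    also have "\<dots> = (\<rho> 1 \<otimes> \<rho> n) [^] Suc i \<otimes> inv (\<rho> n [^] Suc i)"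
      by (rule pow_Suc_mult_inv_pow_Suc[symmetric, OF m_closed[OF closed closed] closed])
    finally show ?thesis .
  qed
qed

lemma rho_relations_imp_torus_relation:
  assumes closed: "\<And>j. \<rho> j \<in> carrier G"
    and rels: "\<And>j. 1 \<le> j \<Longrightarrow> j < n \<Longrightarrow> \<rho> 1 \<otimes> \<rho> n \<otimes> \<rho> j = \<rho> (Suc j) \<otimes> \<rho> n"
    and "1 \<le> n"
  shows "(\<rho> 1 \<otimes> \<rho> n) [^] n = \<rho> n [^] Suc n"
proof -
  have "\<rho> n = (\<rho> 1 \<otimes> \<rho> n) [^] n \<otimes> inv (\<rho> n [^] n)"
    using rho_relations_closed_form[OF closed rels] \<open>1 \<le> n\<close> by blast
  then have "(\<rho> 1 \<otimes> \<rho> n) [^] n = \<rho> n \<otimes> \<rho> n [^] n"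
    using closed by (simp add: inv_solve_right)
  then show ?thesis
    by (simp only: nat_pow_Suc2 closed)
qed

end

subsection \<open>The two presentations of $G(n, n+1)$\<close>

definition rho_to_torus :: "nat \<Rightarrow> gxy word" where
  "rho_to_torus i = replicate i (X, False) @ replicate i (Y, True)"

text \<open>The inverse substitution: \<open>x = \<rho>\<^sub>1 \<rho>\<^sub>n\<close> and \<open>y = \<rho>\<^sub>n\<close>, because
  \<open>\<rho>\<^sub>n = x\<^sup>n y\<^sup>-\<^sup>n = y\<close> in \<open>G(n, n+1)\<close>.\<close>

definition torus_to_rho :: "nat \<Rightarrow> gxy \<Rightarrow> nat word" where
  "torus_to_rho n g = (case g of X \<Rightarrow> [(1, False), (n, False)] | Y \<Rightarrow> [(n, False)])"

lemma torus_relation: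
  "pres_class (torus_rels n (Suc n)) [(X, False)] [^]\<^bsub>presented_group UNIV (torus_rels n (Suc n))\<^esub> n =
   pres_class (torus_rels n (Suc n)) [(Y, False)] [^]\<^bsub>presented_group UNIV (torus_rels n (Suc n))\<^esub> Suc n"
proof -
  have "replicate n (X, False) @ inv_word (replicate (Suc n) (Y, False)) \<in> torus_rels n (Suc n)"
    by (simp add: torus_rels_def del: replicate_Suc)
  then have "pres_class (torus_rels n (Suc n)) (replicate n (X, False)) =
      pres_class (torus_rels n (Suc n)) (replicate (Suc n) (Y, False))"
    by (simp only: pres_eq_relator flip: pres_eq_append_inv_word_Nil_iff)
  then show ?thesis
    by (simp only: pres_class_replicate[where S = UNIV])
qed

lemma rho_relation:
  assumes "1 \<le> i" and "i < n"
  shows "pres_class (rho_rels n) [(1, False)] \<otimes>\<^bsub>presented_group UNIV (rho_rels n)\<^esub>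
      pres_class (rho_rels n) [(n, False)] \<otimes>\<^bsub>presented_group UNIV (rho_rels n)\<^esub>
      pres_class (rho_rels n) [(i, False)] =
    pres_class (rho_rels n) [(Suc i, False)] \<otimes>\<^bsub>presented_group UNIV (rho_rels n)\<^esub>
      pres_class (rho_rels n) [(n, False)]"
proof -
  have "[(1, False), (n, False), (i, False)] @ inv_word [(Suc i, False), (n, False)] \<in> rho_rels n"
    using assms by (auto simp: rho_rels_def simp del: inv_word_Cons)
  then have "pres_class (rho_rels n) [(1, False), (n, False), (i, False)] =
      pres_class (rho_rels n) [(Suc i, False), (n, False)]"
    by (simp only: pres_eq_relator flip: pres_eq_append_inv_word_Nil_iff)
  then show ?thesis
    by (simp add: presented_group_mult)
qed

lemma pres_class_subst_word_rho_to_torus: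
  "pres_class R (subst_word \<theta> (rho_to_torus i)) =
    pres_class R (\<theta> X) [^]\<^bsub>presented_group UNIV R\<^esub> i \<otimes>\<^bsub>presented_group UNIV R\<^esub>
      inv\<^bsub>presented_group UNIV R\<^esub> (pres_class R (\<theta> Y) [^]\<^bsub>presented_group UNIV R\<^esub> i)"
proof -
  have word: "rho_to_torus i = replicate i (X, False) @ inv_word (replicate i (Y, False))"
    by (simp add: rho_to_torus_def)
  show ?thesis
    unfolding word subst_word_append subst_word_inv_word subst_word_replicate
    by (simp add: presented_group_inv presented_group_mult flip: pres_class_concat_replicate[where S = UNIV])
qed

lemma rho_rels_to_torus:
  assumes "r \<in> rho_rels n"
  shows "pres_eq (torus_rels n (Suc n)) (subst_word rho_to_torus r) []"
proof -
  let ?T = "torus_rels n (Suc n)"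
  interpret group "presented_group UNIV ?T"
    by (rule group_presented_group)
  obtain i where r: "r = [(1, False), (n, False), (i, False)] @ inv_word [(Suc i, False), (n, False)]"
    using assms by (auto simp: rho_rels_def simp del: inv_word_Cons)
  have "pres_class ?T (rho_to_torus 1) \<otimes>\<^bsub>presented_group UNIV ?T\<^esub> pres_class ?T (rho_to_torus n)
      \<otimes>\<^bsub>presented_group UNIV ?T\<^esub> pres_class ?T (rho_to_torus i) =
    pres_class ?T (rho_to_torus (Suc i)) \<otimes>\<^bsub>presented_group UNIV ?T\<^esub> pres_class ?T (rho_to_torus n)"
    using torus_relation_imp_rho_relation[OF _ _ torus_relation, of i]
    by (simp only: pres_class_subst_word_rho_to_torus[of _ "\<lambda>a. [(a, False)]", simplified]
        pres_class_in_carrier_UNIV)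
  then show ?thesis
    unfolding r by (intro pres_eq_subst_word_append_inv_word) (simp add: presented_group_mult)
qed

lemma torus_to_rho_to_torus:
  "pres_eq (torus_rels n (Suc n)) (subst_word rho_to_torus (torus_to_rho n g)) [(g, False)]"
proof -
  let ?T = "torus_rels n (Suc n)"
  let ?G = "presented_group UNIV ?T"
  interpret group ?G
    by (rule group_presented_group)
  let ?x = "pres_class ?T [(X, False)]" and ?y = "pres_class ?T [(Y, False)]"
  have class_rho: "pres_class ?T (rho_to_torus i) = ?x [^]\<^bsub>?G\<^esub> i \<otimes>\<^bsub>?G\<^esub> inv\<^bsub>?G\<^esub> (?y [^]\<^bsub>?G\<^esub> i)" for i
    using pres_class_subst_word_rho_to_torus[of ?T "\<lambda>a. [(a, False)]" i] by simp
  have rho_n: "pres_class ?T (rho_to_torus n) = ?y"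
    by (simp add: class_rho torus_relation_imp_pow_mult_inv_pow[OF _ _ torus_relation])
  show ?thesis
  proof (cases g)
    case X
    have "pres_class ?T (subst_word rho_to_torus (torus_to_rho n g)) =
        pres_class ?T (rho_to_torus 1) \<otimes>\<^bsub>?G\<^esub> pres_class ?T (rho_to_torus n)"
      by (simp add: X torus_to_rho_def presented_group_mult)
    also have "\<dots> = ?x \<otimes>\<^bsub>?G\<^esub> inv\<^bsub>?G\<^esub> ?y \<otimes>\<^bsub>?G\<^esub> ?y"
      unfolding rho_n class_rho[of 1] by simp
    also have "\<dots> = ?x"
      by (simp add: m_assoc)
    finally show ?thesis
      by (simp add: X pres_class_eq_iff)
  next
    case Y
    show ?thesis
      using rho_n by (simp add: Y torus_to_rho_def pres_class_eq_iff)
  qed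
qed

lemma torus_rels_to_rho:
  assumes "1 \<le> n" and "r \<in> torus_rels n (Suc n)"
  shows "pres_eq (rho_rels n) (subst_word (torus_to_rho n) r) []"
proof -
  let ?R = "rho_rels n"
  let ?G = "presented_group UNIV ?R"
  interpret group ?G
    by (rule group_presented_group)
  let ?\<rho> = "\<lambda>j. pres_class ?R [(j, False)]"
  have r: "r = replicate n (X, False) @ inv_word (replicate (Suc n) (Y, False))"
    using assms(2) by (simp add: torus_rels_def del: replicate_Suc)
  have "pres_class ?R (torus_to_rho n X) = ?\<rho> 1 \<otimes>\<^bsub>?G\<^esub> ?\<rho> n"
    by (simp add: torus_to_rho_def presented_group_mult)
  moreover have "pres_class ?R (torus_to_rho n Y) = ?\<rho> n"
    by (simp add: torus_to_rho_def)
  moreover have "(?\<rho> 1 \<otimes>\<^bsub>?G\<^esub> ?\<rho> n) [^]\<^bsub>?G\<^esub> n = ?\<rho> n [^]\<^bsub>?G\<^esub> Suc n"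
    using rho_relation by (intro rho_relations_imp_torus_relation[OF _ _ assms(1)]) simp_all
  ultimately show ?thesis
    unfolding r
    by (intro pres_eq_subst_word_append_inv_word)
      (simp only: subst_word_replicate pres_class_concat_replicate[where S = UNIV])
qed

lemma rho_to_torus_to_rho:
  assumes "1 \<le> i" and "i \<le> n"
  shows "pres_eq (rho_rels n) (subst_word (torus_to_rho n) (rho_to_torus i)) [(i, False)]"
proof -
  let ?R = "rho_rels n"
  let ?G = "presented_group UNIV ?R"
  interpret group ?G
    by (rule group_presented_group)
  let ?\<rho> = "\<lambda>j. pres_class ?R [(j, False)]"
  have "pres_class ?R (subst_word (torus_to_rho n) (rho_to_torus i)) =
      (?\<rho> 1 \<otimes>\<^bsub>?G\<^esub> ?\<rho> n) [^]\<^bsub>?G\<^esub> i \<otimes>\<^bsub>?G\<^esub> inv\<^bsub>?G\<^esub> (?\<rho> n [^]\<^bsub>?G\<^esub> i)"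
    by (simp add: pres_class_subst_word_rho_to_torus torus_to_rho_def presented_group_mult)
  also have "\<dots> = ?\<rho> i"
    using rho_relation assms by (intro rho_relations_closed_form[symmetric]) simp_all
  finally show ?thesis
    by (simp add: pres_class_eq_iff)
qed

theorem proposition4p2:
  fixes n :: nat
  assumes "n \<ge> 1"
  shows "\<exists>h. h \<in> iso (rho_group n) (torus_group n (n + 1)) \<and>
           (\<forall>i\<in>{1..n}. h (pres_class (rho_rels n) [(i, False)]) =
              pres_class (torus_rels n (n + 1)) (replicate i (X, False) @ replicate i (Y, True)))"
proof -
  let ?h = "presentation_hom (rho_rels n) (torus_rels n (Suc n)) rho_to_torus"
  have "?h \<in> iso (presented_group {1..n} (rho_rels n)) (presented_group UNIV (torus_rels n (Suc n)))"
  proof (rule presentation_hom_iso)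
    show "set (torus_to_rho n g) \<subseteq> {1..n} \<times> UNIV" for g
      using assms by (cases g) (auto simp: torus_to_rho_def)
  qed (auto intro: rho_rels_to_torus torus_rels_to_rho[OF assms] rho_to_torus_to_rho
      torus_to_rho_to_torus)
  moreover have "?h (pres_class (rho_rels n) [(i, False)]) =
      pres_class (torus_rels n (Suc n)) (rho_to_torus i)" for i
    by (simp add: presentation_hom_pres_class rho_rels_to_torus)
  ultimately show ?thesis
    by (auto simp: rho_group_def torus_group_def rho_to_torus_def)
qed

end
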